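(* Let $k\ge1$ and let $H\le\mathrm{Aut}(X^* )$ be generated by $r_0=\sigma(\mathrm{id},\mathrm{id})$, $r_i=(r_{i-1},\mathrm{id})$ for $1\le i\le k$, $b_0=(r_k,b_1)$, $b_1=(r_k,b_2)$, $b_2=(\mathrm{id},b_0)$. Then $H$ is a regular branch group over its commutator subgroup $H'$.
   Context: Let $X=\{0,1\}$, $X^*$ the rooted binary tree of finite words, $G=\mathrm{Aut}(X^* )$. Sections: $g(wv)=g(w)g_w(v)$. Wreath recursion: $g=\sigma^{\varepsilon}(g_0,g_1)$ means $g(xw)=\sigma^\varepsilon(x)g_x(w)$ for $x\in X$, with $\sigma$ the swap of $0,1$. For $g\in G$ and $x\in X$, $\delta_x(g)\in G$ is the automorphism acting as $g$ on the subtree below $x$ (i.e. $xv\mapsto xg(v)$) and trivially elsewhere. An infinite subgroup $H\le G$ is regular branch over $K\le H$ if $K$ is normal of finite index in $H$ and $\delta_x(k)\in K$ for all $k\in K$, $x\in X$. *)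

theory Defs
  imports "HOL-Algebra.Algebra"
begin

text \<open>Letters: False = 0, True = 1. Words of the binary tree are bool lists.\<close>

definition tree_aut :: "(bool list \<Rightarrow> bool list) \<Rightarrow> bool" where
  "tree_aut f \<longleftrightarrow> bij f \<and> (\<forall>w. length (f w) = length w)
     \<and> (\<forall>u v. take (length u) (f (u @ v)) = f u)"

definition AutG :: "(bool list \<Rightarrow> bool list) monoid" where
  "AutG = \<lparr>carrier = {f. tree_aut f}, monoid.mult = (\<lambda>f g. f \<circ> g), one = id\<rparr>"

definition delta :: "bool \<Rightarrow> (bool list \<Rightarrow> bool list) \<Rightarrow> bool list \<Rightarrow> bool list" where
  "delta x g w = (case w of [] \<Rightarrow> [] | y # v \<Rightarrow> (if y = x then x # g v else w))"

definition regular_branch :: "(bool list \<Rightarrow> bool list) set \<Rightarrow> (bool list \<Rightarrow> bool list) set \<Rightarrow> bool" where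
  "regular_branch H K \<longleftrightarrow> subgroup H AutG \<and> infinite H \<and> K \<subseteq> H
     \<and> normal K (AutG\<lparr>carrier := H\<rparr>)
     \<and> finite (rcosets\<^bsub>AutG\<lparr>carrier := H\<rparr>\<^esub> K)
     \<and> (\<forall>g\<in>K. \<forall>x. delta x g \<in> K)"

text \<open>r_0 = sigma(id,id), r_(i+1) = (r_i, id).\<close>
fun rgen :: "nat \<Rightarrow> bool list \<Rightarrow> bool list" where
  "rgen i [] = []"
| "rgen 0 (x # w) = (\<not> x) # w"
| "rgen (Suc i) (x # w) = (if x then x # w else x # rgen i w)"

text \<open>bgen k j for j = 0,1,2: b_0 = (r_k, b_1), b_1 = (r_k, b_2), b_2 = (id, b_0).\<close>
fun bgen :: "nat \<Rightarrow> nat \<Rightarrow> bool list \<Rightarrow> bool list" where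
  "bgen k j [] = []"
| "bgen k j (x # w) =
     (if j = 2 then (if x then x # bgen k 0 w else x # w)
      else (if x then x # bgen k (Suc j) w else x # rgen k w))"

end

theory Submission
  imports Defs
begin

text \<open>Conjugation by r_0 swaps the two coordinates of the wreath recursion, and with it one checks on
the generators that every h in H has a lift (x, h) in H whose first coordinate x lies in the Klein
four-group generated by the commuting involutions b_2 and r_k. As this group is abelian, the commutator
of two lifts (x, a) and (y, b) is (1, [a, b]); hence delta True maps H' into H', and conjugating by
r_0 gives the same for delta False. Iterating delta True on the nontrivial commutator [r_0, r_1] yields
infinitely many elements of H', and H/H' is finite because it is an abelian group generated by
finitely many involutions.\<close>

lemma tree_autI:
  assumes "f \<circ> g = id" "g \<circ> f = id" "\<And>w. length (f w) = length w"
    "\<And>u v. take (length u) (f (u @ v)) = f u"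
  shows "tree_aut f"
  unfolding tree_aut_def using assms o_bij by blast

lemma tree_aut_length: "tree_aut f \<Longrightarrow> length (f w) = length w"
  unfolding tree_aut_def by blast

lemma tree_aut_take: "tree_aut f \<Longrightarrow> take (length u) (f (u @ v)) = f u"
  unfolding tree_aut_def by blast

lemma tree_aut_bij: "tree_aut f \<Longrightarrow> bij f"
  unfolding tree_aut_def by blast

lemma tree_aut_Nil: "tree_aut f \<Longrightarrow> f [] = []"
  using tree_aut_length[of f "[]"] by simp

lemma tree_aut_id: "tree_aut id"
  unfolding tree_aut_def by simp

lemma tree_aut_comp:
  assumes f: "tree_aut f" and g: "tree_aut g"
  shows "tree_aut (f \<circ> g)"
proof -
  have "take (length u) (f (g (u @ v))) = f (g u)" for u v
  proof -
    have "g (u @ v) = g u @ drop (length u) (g (u @ v))"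
      using tree_aut_take[OF g, of u v] by (metis append_take_drop_id)
    then show ?thesis
      using tree_aut_take[OF f, of "g u"] tree_aut_length[OF g, of u] by metis
  qed
  then show ?thesis
    using f g unfolding tree_aut_def by (auto intro: bij_comp)
qed

lemma tree_aut_inv:
  assumes f: "tree_aut f"
  shows "tree_aut (Hilbert_Choice.inv f)"
proof -
  have bij: "bij f" using f tree_aut_bij by blast
  have f_inv: "f (Hilbert_Choice.inv f w) = w" for w using bij by (simp add: bij_is_surj surj_f_inv_f)
  have length: "length (Hilbert_Choice.inv f w) = length w" for w
    using tree_aut_length[OF f, of "Hilbert_Choice.inv f w"] f_inv by simp
  have "take (length u) (Hilbert_Choice.inv f (u @ v)) = Hilbert_Choice.inv f u" for u v
  proof -
    let ?y = "Hilbert_Choice.inv f (u @ v)"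
    have "f (take (length u) ?y) = take (length u) (f ?y)"
      using tree_aut_take[OF f, of "take (length u) ?y" "drop (length u) ?y"] length[of "u @ v"]
      by simp
    then have "f (take (length u) ?y) = u" by (simp add: f_inv)
    then show ?thesis using bij by (metis bij_is_inj inv_f_f)
  qed
  then show ?thesis
    using bij length bij_imp_bij_inv unfolding tree_aut_def by blast
qed

lemma group_AutG: "group AutG"
proof (rule groupI)
  fix x assume "x \<in> carrier AutG"
  then have "tree_aut x" by (simp add: AutG_def)
  then show "\<exists>y\<in>carrier AutG. y \<otimes>\<^bsub>AutG\<^esub> x = \<one>\<^bsub>AutG\<^esub>"
    by (intro bexI[of _ "Hilbert_Choice.inv x"]) (simp_all add: AutG_def tree_aut_inv tree_aut_bij bij_is_inj)
qed (auto simp: AutG_def tree_aut_comp tree_aut_id o_assoc)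

interpretation AutG: group AutG
  by (rule group_AutG)

lemma AutG_simps [simp]:
  "carrier AutG = {f. tree_aut f}" "x \<otimes>\<^bsub>AutG\<^esub> y = x \<circ> y" "\<one>\<^bsub>AutG\<^esub> = id"
  by (simp_all add: AutG_def)

lemma inv_AutG_involution: "tree_aut s \<Longrightarrow> s \<circ> s = id \<Longrightarrow> inv\<^bsub>AutG\<^esub> s = s"
  using AutG.inv_equality[of s s] by simp

definition wpair :: "(bool list \<Rightarrow> bool list) \<Rightarrow> (bool list \<Rightarrow> bool list) \<Rightarrow> bool list \<Rightarrow> bool list"
  where "wpair g0 g1 w = (case w of [] \<Rightarrow> [] | x # v \<Rightarrow> x # (if x then g1 v else g0 v))"

lemma wpair_simps [simp]:
  "wpair g0 g1 [] = []" "wpair g0 g1 (x # v) = x # (if x then g1 v else g0 v)"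
  by (simp_all add: wpair_def)

lemma wpair_comp: "wpair f0 f1 \<circ> wpair g0 g1 = wpair (f0 \<circ> g0) (f1 \<circ> g1)"
  by (auto simp: fun_eq_iff wpair_def split: list.split)

lemma wpair_id: "wpair id id = id"
  by (auto simp: fun_eq_iff wpair_def split: list.split)

lemma delta_eq_wpair: "delta x g = (if x then wpair id g else wpair g id)"
  by (auto simp: fun_eq_iff delta_def split: list.split)

lemma tree_aut_wpair:
  assumes "tree_aut g0" "tree_aut g1"
  shows "tree_aut (wpair g0 g1)"
proof (rule tree_autI)
  have "g \<circ> Hilbert_Choice.inv g = id" "Hilbert_Choice.inv g \<circ> g = id" if "tree_aut g" for g
    using tree_aut_bij[OF that] by (simp_all add: bij_is_surj bij_is_inj surj_iff[THEN iffD1] inj_iff[THEN iffD1])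
  then show "wpair g0 g1 \<circ> wpair (Hilbert_Choice.inv g0) (Hilbert_Choice.inv g1) = id" "wpair (Hilbert_Choice.inv g0) (Hilbert_Choice.inv g1) \<circ> wpair g0 g1 = id"
    using assms by (simp_all add: wpair_comp wpair_id)
  show "length (wpair g0 g1 w) = length w" for w
    using assms by (cases w) (simp_all add: tree_aut_length)
  show "take (length u) (wpair g0 g1 (u @ v)) = wpair g0 g1 u" for u v
    using assms by (cases u) (simp_all add: tree_aut_take)
qed

lemma inv_wpair:
  assumes "g0 \<in> carrier AutG" "g1 \<in> carrier AutG"
  shows "inv\<^bsub>AutG\<^esub> (wpair g0 g1) = wpair (inv\<^bsub>AutG\<^esub> g0) (inv\<^bsub>AutG\<^esub> g1)"
  using assms AutG.l_inv[of g0] AutG.l_inv[of g1] AutG.inv_closed[of g0] AutG.inv_closed[of g1]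
  by (intro AutG.inv_equality) (simp_all add: wpair_comp wpair_id tree_aut_wpair)

lemma wpair_commutator:
  assumes "x \<in> carrier AutG" "y \<in> carrier AutG" "a \<in> carrier AutG" "b \<in> carrier AutG"
  shows "wpair x a \<otimes>\<^bsub>AutG\<^esub> wpair y b \<otimes>\<^bsub>AutG\<^esub> inv\<^bsub>AutG\<^esub> wpair x a \<otimes>\<^bsub>AutG\<^esub> inv\<^bsub>AutG\<^esub> wpair y b
       = wpair (x \<otimes>\<^bsub>AutG\<^esub> y \<otimes>\<^bsub>AutG\<^esub> inv\<^bsub>AutG\<^esub> x \<otimes>\<^bsub>AutG\<^esub> inv\<^bsub>AutG\<^esub> y)
               (a \<otimes>\<^bsub>AutG\<^esub> b \<otimes>\<^bsub>AutG\<^esub> inv\<^bsub>AutG\<^esub> a \<otimes>\<^bsub>AutG\<^esub> inv\<^bsub>AutG\<^esub> b)"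
  unfolding inv_wpair[OF assms(1,3)] inv_wpair[OF assms(2,4)] AutG_simps(2) wpair_comp ..

lemma delta_hom: "group_hom AutG AutG (delta x)"
  by (unfold_locales) (auto simp: hom_def delta_eq_wpair tree_aut_wpair tree_aut_id wpair_comp)

lemma subgroup_wpair_liftable:
  assumes A: "subgroup A AutG" and H: "subgroup H AutG"
  shows "subgroup {h \<in> carrier AutG. \<exists>x\<in>A. wpair x h \<in> H} AutG" (is "subgroup ?L AutG")
proof (rule AutG.subgroupI)
  have "wpair \<one>\<^bsub>AutG\<^esub> \<one>\<^bsub>AutG\<^esub> \<in> H"
    using subgroup.one_closed[OF H] by (simp add: wpair_id)
  then show "?L \<noteq> {}"
    using subgroup.one_closed[OF A] by blast
next
  fix h assume "h \<in> ?L"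
  then obtain x where h: "h \<in> carrier AutG" and x: "x \<in> A" "wpair x h \<in> H" by blast
  have x_carrier: "x \<in> carrier AutG" using x subgroup.subset[OF A] by blast
  have "wpair (inv\<^bsub>AutG\<^esub> x) (inv\<^bsub>AutG\<^esub> h) \<in> H"
    using subgroup.m_inv_closed[OF H x(2)] by (simp only: inv_wpair[OF x_carrier h])
  then show "inv\<^bsub>AutG\<^esub> h \<in> ?L"
    using subgroup.m_inv_closed[OF A x(1)] AutG.inv_closed[OF h] by blast
next
  fix g h assume "g \<in> ?L" "h \<in> ?L"
  then obtain x y where gh: "g \<in> carrier AutG" "h \<in> carrier AutG"
    and xy: "x \<in> A" "y \<in> A" "wpair x g \<in> H" "wpair y h \<in> H" by blast
  have "wpair (x \<otimes>\<^bsub>AutG\<^esub> y) (g \<otimes>\<^bsub>AutG\<^esub> h) \<in> H"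
    using subgroup.m_closed[OF H xy(3,4)] by (simp only: AutG_simps(2) wpair_comp)
  then show "g \<otimes>\<^bsub>AutG\<^esub> h \<in> ?L"
    using subgroup.m_closed[OF A xy(1,2)] AutG.m_closed[OF gh] by blast
qed auto

lemma delta_True_derived_subset:
  assumes H: "subgroup H AutG" and A: "A \<subseteq> carrier AutG"
    and comm: "\<And>x y. x \<in> A \<Longrightarrow> y \<in> A \<Longrightarrow> x \<circ> y = y \<circ> x"
    and lift: "\<And>h. h \<in> H \<Longrightarrow> \<exists>x\<in>A. wpair x h \<in> H"
  shows "delta True ` derived AutG H \<subseteq> derived AutG H"
proof -
  interpret delta_True: group_hom AutG AutG "delta True" by (rule delta_hom)
  have H_carrier: "H \<subseteq> carrier AutG" using H by (rule subgroup.subset)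
  have "derived_set AutG (delta True ` H) \<subseteq> derived_set AutG H"
  proof
    fix c assume "c \<in> derived_set AutG (delta True ` H)"
    then obtain a b where ab: "a \<in> H" "b \<in> H" and c: "c =
        delta True a \<otimes>\<^bsub>AutG\<^esub> delta True b \<otimes>\<^bsub>AutG\<^esub> inv\<^bsub>AutG\<^esub> delta True a \<otimes>\<^bsub>AutG\<^esub> inv\<^bsub>AutG\<^esub> delta True b"
      by blast
    obtain x y where xy: "x \<in> A" "y \<in> A" "wpair x a \<in> H" "wpair y b \<in> H"
      using lift ab by meson
    have carrier: "x \<in> carrier AutG" "y \<in> carrier AutG" "a \<in> carrier AutG" "b \<in> carrier AutG"
      using xy ab A H_carrier by auto
    have "x \<otimes>\<^bsub>AutG\<^esub> y \<otimes>\<^bsub>AutG\<^esub> inv\<^bsub>AutG\<^esub> x \<otimes>\<^bsub>AutG\<^esub> inv\<^bsub>AutG\<^esub> y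
        = (x \<otimes>\<^bsub>AutG\<^esub> y) \<otimes>\<^bsub>AutG\<^esub> inv\<^bsub>AutG\<^esub> (y \<otimes>\<^bsub>AutG\<^esub> x)"
      using carrier by (simp add: AutG.m_assoc AutG.inv_mult_group del: AutG_simps)
    also have "\<dots> = \<one>\<^bsub>AutG\<^esub>"
    proof -
      have "y \<otimes>\<^bsub>AutG\<^esub> x = x \<otimes>\<^bsub>AutG\<^esub> y" using comm[OF xy(2,1)] by simp
      then show ?thesis using carrier by (simp del: AutG_simps)
    qed
    finally have commutator_xy: "x \<otimes>\<^bsub>AutG\<^esub> y \<otimes>\<^bsub>AutG\<^esub> inv\<^bsub>AutG\<^esub> x \<otimes>\<^bsub>AutG\<^esub> inv\<^bsub>AutG\<^esub> y = \<one>\<^bsub>AutG\<^esub>" .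
    have "c = delta True (a \<otimes>\<^bsub>AutG\<^esub> b \<otimes>\<^bsub>AutG\<^esub> inv\<^bsub>AutG\<^esub> a \<otimes>\<^bsub>AutG\<^esub> inv\<^bsub>AutG\<^esub> b)"
      using carrier by (simp add: c del: AutG_simps)
    also have "\<dots> = wpair x a \<otimes>\<^bsub>AutG\<^esub> wpair y b \<otimes>\<^bsub>AutG\<^esub> inv\<^bsub>AutG\<^esub> wpair x a \<otimes>\<^bsub>AutG\<^esub> inv\<^bsub>AutG\<^esub> wpair y b"
      using carrier by (simp add: wpair_commutator commutator_xy delta_eq_wpair del: AutG_simps(1,2))
    finally show "c \<in> derived_set AutG H" using xy by blast
  qed
  then have "derived AutG (delta True ` H) \<subseteq> derived AutG H"
    unfolding derived_def by (rule AutG.mono_generate)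
  then show ?thesis
    using delta_True.derived_img[OF H_carrier] by simp
qed

lemma delta_True_iterate_fixes_short:
  assumes "g [] = []" "length w \<le> n"
  shows "(delta True ^^ n) g w = w"
  using assms(2)
proof (induction n arbitrary: w)
  case 0
  then show ?case using assms(1) by simp
next
  case (Suc n)
  then show ?case by (cases w) (simp_all add: delta_def)
qed

lemma inj_delta: "inj (delta x)"
proof (rule injI)
  fix f g assume "delta x f = delta x g"
  then have "delta x f (x # v) = delta x g (x # v)" for v by simp
  then show "f = g" by (simp add: fun_eq_iff delta_def)
qed

lemma inj_delta_True_iterates:
  assumes g: "tree_aut g" "g \<noteq> id"
  shows "inj (\<lambda>n. (delta True ^^ n) g)"
proof (rule linorder_injI)
  fix m n :: nat assume "m < n"
  show "(delta True ^^ m) g \<noteq> (delta True ^^ n) g"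
  proof
    assume eq: "(delta True ^^ m) g = (delta True ^^ n) g"
    define d where "d = n - m"
    have "n = m + d" "d > 0" using \<open>m < n\<close> by (simp_all add: d_def)
    then have "(delta True ^^ m) g = (delta True ^^ m) ((delta True ^^ d) g)"
      using eq by (simp add: funpow_add)
    then have periodic: "(delta True ^^ d) g = g"
      using inj_fn[OF inj_delta] by (metis injD)
    have "((delta True ^^ d) ^^ j) g = g" for j
      by (induction j) (simp_all add: periodic funpow_Suc_right del: funpow.simps)
    then have "(delta True ^^ (d * j)) g = g" for j
      by (simp add: funpow_mult)
    moreover obtain w where "g w \<noteq> w" using g(2) by (auto simp: fun_eq_iff)
    moreover have "(delta True ^^ (d * length w)) g w = w"
      using \<open>d > 0\<close> by (intro delta_True_iterate_fixes_short tree_aut_Nil g(1)) simp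
    ultimately show False by metis
  qed
qed

lemma infinite_if_delta_True_closed:
  assumes K: "K \<subseteq> carrier AutG" "\<And>f. f \<in> K \<Longrightarrow> delta True f \<in> K"
    and g: "g \<in> K" "g \<noteq> id"
  shows "infinite K"
proof
  assume "finite K"
  have "(delta True ^^ n) g \<in> K" for n
    by (induction n) (simp_all add: g(1) K(2))
  then have "range (\<lambda>n. (delta True ^^ n) g) \<subseteq> K"
    by auto
  then have "finite (range (\<lambda>n. (delta True ^^ n) g))"
    using \<open>finite K\<close> by (rule finite_subset)
  moreover have "inj (\<lambda>n. (delta True ^^ n) g)"
    using g K(1) by (intro inj_delta_True_iterates) auto
  ultimately show False
    using finite_imageD infinite_UNIV_nat by blast
qed

lemma (in comm_group) finite_generate_involutions:
  assumes S: "finite S" "S \<subseteq> carrier G" and invol: "\<And>s. s \<in> S \<Longrightarrow> s \<otimes> s = \<one>"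
  shows "finite (generate G S)"
proof -
  let ?P = "finprod G (\<lambda>x. x) ` Pow S"
  have fin: "finite T" "(\<lambda>x. x) \<in> T \<rightarrow> carrier G" if "T \<subseteq> S" for T
    using that S finite_subset by auto
  have times_gen: "finprod G (\<lambda>x. x) T \<otimes> s \<in> ?P" if T: "T \<subseteq> S" and s: "s \<in> S" for T s
  proof (cases "s \<in> T")
    case True
    have "T - {s} \<subseteq> S" using T by blast
    then have "finprod G (\<lambda>x. x) T = s \<otimes> finprod G (\<lambda>x. x) (T - {s})"
      using finprod_insert[of "T - {s}" s "\<lambda>x. x", unfolded insert_Diff[OF True]] fin[OF T] s S(2) by auto
    then have "finprod G (\<lambda>x. x) T \<otimes> s = finprod G (\<lambda>x. x) (T - {s})"
      using invol[OF s] s S(2) fin[of "T - {s}"] T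
      by (simp add: m_comm m_assoc[symmetric] finprod_closed subset_iff)
    then show ?thesis using T by blast
  next
    case False
    have "finprod G (\<lambda>x. x) (insert s T) = finprod G (\<lambda>x. x) T \<otimes> s"
      using finprod_insert[of T s "\<lambda>x. x"] fin[OF T] s S(2) False
      by (auto simp: m_comm finprod_closed)
    then show ?thesis using T s by (metis Pow_iff image_eqI insert_subset)
  qed
  have times_P: "p \<otimes> finprod G (\<lambda>x. x) T \<in> ?P" if p: "p \<in> ?P" and T: "T \<subseteq> S" for p T
    using fin(1)[OF T] T
  proof (induction T rule: finite_induct)
    case empty
    obtain T0 where "T0 \<subseteq> S" "p = finprod G (\<lambda>x. x) T0" using p by blast
    then have "p \<in> carrier G" using fin(2) by (simp add: finprod_closed)
    then show ?case using p by simp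
  next
    case (insert s T)
    then obtain T' where T': "T' \<subseteq> S" "p \<otimes> finprod G (\<lambda>x. x) T = finprod G (\<lambda>x. x) T'" by auto
    have "p \<otimes> finprod G (\<lambda>x. x) (insert s T) = (p \<otimes> finprod G (\<lambda>x. x) T) \<otimes> s"
      using insert p fin S(2) by (auto simp: m_ac finprod_closed)
    then show ?case using times_gen[OF T'(1)] insert(4) T'(2) by simp
  qed
  have gen: "s \<in> ?P" if "s \<in> S" for s
    using times_gen[of "{}" s] that S(2) by auto
  have "generate G S \<subseteq> ?P"
  proof
    fix h assume "h \<in> generate G S"
    then show "h \<in> ?P"
    proof (induction rule: generate.induct)
      case one
      then show ?case by force
    next
      case (incl s)
      then show ?case by (rule gen)
    next
      case (inv s)
      then have "inv s = s" using invol S(2) by (auto intro: inv_equality)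
      then show ?case using gen[OF inv] by simp
    next
      case (eng h1 h2)
      then show ?case using times_P by blast
    qed
  qed
  then show ?thesis using S(1) finite_subset by blast
qed

lemma (in group) finite_index_derived_generate_involutions:
  assumes S: "finite S" "S \<subseteq> carrier G" and invol: "\<And>s. s \<in> S \<Longrightarrow> s \<otimes> s = \<one>"
  shows "finite (rcosets\<^bsub>G\<lparr>carrier := generate G S\<rparr>\<^esub> derived G (generate G S))"
proof -
  define H where "H = generate G S"
  let ?Q = "G\<lparr>carrier := H\<rparr> Mod derived G H"
  let ?coset = "\<lambda>a. derived G H #>\<^bsub>G\<lparr>carrier := H\<rparr>\<^esub> a"
  have H: "subgroup H G" unfolding H_def using S(2) by (rule generate_is_subgroup)
  interpret N: normal "derived G H" "G\<lparr>carrier := H\<rparr>"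
    using derived_subgroup_is_normal[OF H] .
  interpret Q: comm_group ?Q
    using derived_quot_of_subgroup_is_comm_group[OF H] .
  interpret coset: group_hom "G\<lparr>carrier := H\<rparr>" ?Q ?coset
    by (intro group_hom.intro group_hom_axioms.intro N.is_group Q.is_group N.r_coset_hom_Mod)
  have S_H: "S \<subseteq> carrier (G\<lparr>carrier := H\<rparr>)"
    by (auto simp: H_def intro: generate.incl)
  have "rcosets\<^bsub>G\<lparr>carrier := H\<rparr>\<^esub> derived G H = ?coset ` H"
    by (auto simp: RCOSETS_def)
  also have "\<dots> = generate ?Q (?coset ` S)"
    using coset.generate_img[OF S_H] generate_consistent[OF _ H] S_H by (simp add: H_def)
  moreover have "finite (generate ?Q (?coset ` S))"
  proof (rule Q.finite_generate_involutions)
    show "finite (?coset ` S)" using S(1) by (rule finite_imageI)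
    show "?coset ` S \<subseteq> carrier ?Q" using S_H coset.hom_closed by blast
    show "t \<otimes>\<^bsub>?Q\<^esub> t = \<one>\<^bsub>?Q\<^esub>" if t: "t \<in> ?coset ` S" for t
    proof -
      obtain s where s: "s \<in> S" "t = ?coset s" using t by blast
      then have "t \<otimes>\<^bsub>?Q\<^esub> t = ?coset (s \<otimes> s)"
        using coset.hom_mult[of s s] S_H by auto
      then show ?thesis using invol[OF s(1)] coset.hom_one by simp
    qed
  qed
  ultimately show ?thesis by (simp add: H_def)
qed

lemma tree_aut_involutionI:
  assumes "\<And>w. f (f w) = w" "\<And>w. length (f w) = length w"
    "\<And>u v. take (length u) (f (u @ v)) = f u"
  shows "tree_aut f"
  by (rule tree_autI[where g = f]) (auto simp: assms fun_eq_iff)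

lemma rgen_rgen [simp]: "rgen i (rgen i w) = w"
  by (induction i w rule: rgen.induct) auto

lemma tree_aut_rgen: "tree_aut (rgen i)"
proof (rule tree_aut_involutionI)
  show "length (rgen i w) = length w" for w
    by (induction i w rule: rgen.induct) auto
  show "take (length u) (rgen i (u @ v)) = rgen i u" for u v
    by (induction i u rule: rgen.induct) auto
qed simp

lemma rgen_0_wpair_swap: "rgen 0 \<circ> wpair g0 g1 \<circ> rgen 0 = wpair g1 g0"
proof
  show "(rgen 0 \<circ> wpair g0 g1 \<circ> rgen 0) w = wpair g1 g0 w" for w
    by (cases w) auto
qed

lemma delta_derived_closed:
  assumes H: "subgroup H AutG" and swap: "rgen 0 \<in> H"
    and delta_True: "delta True ` derived AutG H \<subseteq> derived AutG H"
    and g: "g \<in> derived AutG H"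
  shows "delta x g \<in> derived AutG H"
proof (cases x)
  case True
  have "delta True g \<in> derived AutG H"
    using delta_True imageI[OF g] by (rule subsetD)
  then show ?thesis using True by simp
next
  case False
  interpret N: normal "derived AutG H" "AutG\<lparr>carrier := H\<rparr>"
    using AutG.derived_subgroup_is_normal[OF H] .
  have inv_swap: "inv\<^bsub>AutG\<^esub> rgen 0 = rgen 0"
    by (simp add: inv_AutG_involution tree_aut_rgen fun_eq_iff)
  have "rgen 0 \<circ> delta True g \<circ> rgen 0 \<in> derived AutG H"
    using N.inv_op_closed2[of "rgen 0" "delta True g"] swap delta_True g
    by (auto simp: AutG.m_inv_consistent[OF H swap] inv_swap)
  then show ?thesis
    using False by (simp add: delta_eq_wpair rgen_0_wpair_swap)
qed

lemma bgen_bgen [simp]: "j \<le> 2 \<Longrightarrow> bgen k j (bgen k j w) = w"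
  by (induction k j w rule: bgen.induct) auto

lemma tree_aut_bgen:
  assumes "j \<le> 2"
  shows "tree_aut (bgen k j)"
proof (rule tree_aut_involutionI)
  show "length (bgen k j w) = length w" for w
    by (induction k j w rule: bgen.induct) (auto simp: tree_aut_length[OF tree_aut_rgen])
  show "take (length u) (bgen k j (u @ v)) = bgen k j u" for u v
    by (induction u arbitrary: j) (auto simp: tree_aut_take[OF tree_aut_rgen])
qed (simp add: assms)

lemma rgen_Suc_eq_wpair: "rgen (Suc i) = wpair (rgen i) id"
proof
  show "rgen (Suc i) w = wpair (rgen i) id w" for w
    by (cases w) auto
qed

lemma bgen_eq_wpair:
  "bgen k 0 = wpair (rgen k) (bgen k 1)"
  "bgen k 1 = wpair (rgen k) (bgen k 2)"
  "bgen k 2 = wpair id (bgen k 0)"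
  by (auto simp: fun_eq_iff wpair_def numeral_2_eq_2 split: list.split)

lemma bgen_2_rgen_commute:
  assumes "1 \<le> k"
  shows "bgen k 2 \<circ> rgen k = rgen k \<circ> bgen k 2"
proof -
  obtain i where "k = Suc i" using assms by (cases k) auto
  then show ?thesis
    by (simp only: bgen_eq_wpair(3) rgen_Suc_eq_wpair wpair_comp id_o o_id)
qed

lemma klein_four_group:
  assumes "tree_aut u" "tree_aut v" "u \<circ> u = id" "v \<circ> v = id" "u \<circ> v = v \<circ> u"
  shows "subgroup {id, u, v, u \<circ> v} AutG" and "x \<in> {id, u, v, u \<circ> v} \<Longrightarrow> y \<in> {id, u, v, u \<circ> v} \<Longrightarrow> x \<circ> y = y \<circ> x"
proof -
  have normalize: "u \<circ> (u \<circ> f) = f" "v \<circ> (v \<circ> f) = f" "v \<circ> (u \<circ> f) = u \<circ> (v \<circ> f)" "v \<circ> u = u \<circ> v" for f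
    using assms(3-5) by (simp_all add: o_assoc)
  show "x \<in> {id, u, v, u \<circ> v} \<Longrightarrow> y \<in> {id, u, v, u \<circ> v} \<Longrightarrow> x \<circ> y = y \<circ> x"
    using assms(3,4) by (auto simp: normalize comp_assoc)
  show "subgroup {id, u, v, u \<circ> v} AutG"
  proof (rule AutG.subgroupI)
    show "{id, u, v, u \<circ> v} \<subseteq> carrier AutG"
      using assms(1,2) by (simp add: tree_aut_id tree_aut_comp)
    show "inv\<^bsub>AutG\<^esub> x \<in> {id, u, v, u \<circ> v}" if "x \<in> {id, u, v, u \<circ> v}" for x
    proof -
      have "tree_aut x" "x \<circ> x = id"
        using that assms(1-4) by (auto simp: tree_aut_id tree_aut_comp normalize comp_assoc)
      then show ?thesis using that by (simp add: inv_AutG_involution)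
    qed
    show "x \<otimes>\<^bsub>AutG\<^esub> y \<in> {id, u, v, u \<circ> v}" if "x \<in> {id, u, v, u \<circ> v}" "y \<in> {id, u, v, u \<circ> v}" for x y
      using that assms(3,4) by (auto simp: normalize comp_assoc)
  qed simp
qed

definition H_gens :: "nat \<Rightarrow> (bool list \<Rightarrow> bool list) set" where
  "H_gens k = rgen ` {0..k} \<union> {bgen k 0, bgen k 1, bgen k 2}"

lemma finite_H_gens: "finite (H_gens k)"
  by (simp add: H_gens_def)

lemma tree_aut_H_gens: "s \<in> H_gens k \<Longrightarrow> tree_aut s"
  by (auto simp: H_gens_def tree_aut_rgen tree_aut_bgen)

lemma H_gens_involution: "s \<in> H_gens k \<Longrightarrow> s \<circ> s = id"
  by (auto simp: H_gens_def fun_eq_iff)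

lemma wpair_lift_H_gens:
  assumes "s \<in> H_gens k"
  shows "\<exists>x\<in>{id, bgen k 2, rgen k, bgen k 2 \<circ> rgen k}. wpair x s \<in> generate AutG (H_gens k)"
proof -
  have gen: "t \<in> generate AutG (H_gens k)" if "t \<in> H_gens k" for t
    using that by (rule generate.incl)
  have swap_conj: "rgen 0 \<circ> t \<circ> rgen 0 \<in> generate AutG (H_gens k)" if "t \<in> H_gens k" for t
    using generate.eng[OF generate.eng[OF gen gen] gen, of "rgen 0" t "rgen 0"] that
    by (simp add: H_gens_def)
  consider (r) i where "i < k" "s = rgen i" | (rk) "s = rgen k"
    | (b0) "s = bgen k 0" | (b1) "s = bgen k 1" | (b2) "s = bgen k 2"
    using assms unfolding H_gens_def by (auto simp: le_less)
  then show ?thesis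
  proof cases
    case r
    have "wpair id s = rgen 0 \<circ> rgen (Suc i) \<circ> rgen 0"
      by (simp add: r rgen_Suc_eq_wpair rgen_0_wpair_swap)
    then show ?thesis using swap_conj[of "rgen (Suc i)"] r by (auto simp: H_gens_def)
  next
    case rk
    have "wpair (bgen k 2) s = rgen 0 \<circ> bgen k 1 \<circ> rgen 0"
      by (simp only: rk bgen_eq_wpair(2) rgen_0_wpair_swap)
    then show ?thesis using swap_conj[of "bgen k 1"] by (auto simp: H_gens_def)
  next
    case b0
    have "wpair id s = bgen k 2" by (simp only: b0 bgen_eq_wpair(3))
    then show ?thesis using gen[of "bgen k 2"] by (auto simp: H_gens_def)
  next
    case b1
    have "wpair (rgen k) s = bgen k 0" by (simp only: b1 bgen_eq_wpair(1))
    then show ?thesis using gen[of "bgen k 0"] by (auto simp: H_gens_def)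
  next
    case b2
    have "wpair (rgen k) s = bgen k 1" by (simp only: b2 bgen_eq_wpair(2))
    then show ?thesis using gen[of "bgen k 1"] by (auto simp: H_gens_def)
  qed
qed

lemma subgroup_H: "subgroup (generate AutG (H_gens k)) AutG"
  by (rule AutG.generate_is_subgroup) (auto simp: tree_aut_H_gens)

lemma delta_True_derived_H:
  assumes "1 \<le> k"
  shows "delta True ` derived AutG (generate AutG (H_gens k)) \<subseteq> derived AutG (generate AutG (H_gens k))"
proof -
  let ?A = "{id, bgen k 2, rgen k, bgen k 2 \<circ> rgen k}"
  have "tree_aut (bgen k 2)" "bgen k 2 \<circ> bgen k 2 = id" "rgen k \<circ> rgen k = id"
    by (simp_all add: tree_aut_bgen fun_eq_iff)
  note klein = klein_four_group[OF this(1) tree_aut_rgen this(2,3) bgen_2_rgen_commute[OF assms]]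
  have lift: "generate AutG (H_gens k)
      \<subseteq> {h \<in> carrier AutG. \<exists>x\<in>?A. wpair x h \<in> generate AutG (H_gens k)}"
    using wpair_lift_H_gens tree_aut_H_gens
    by (intro AutG.generate_subgroup_incl subgroup_wpair_liftable[OF klein(1) subgroup_H]) auto
  show ?thesis
  proof (rule delta_True_derived_subset[OF subgroup_H])
    show "?A \<subseteq> carrier AutG" using klein(1) by (rule subgroup.subset)
    show "x \<circ> y = y \<circ> x" if "x \<in> ?A" "y \<in> ?A" for x y using that by (rule klein(2))
    show "\<exists>x\<in>?A. wpair x h \<in> generate AutG (H_gens k)" if "h \<in> generate AutG (H_gens k)" for h
      using lift that by blast
  qed
qed

lemma commutator_rgen_in_derived:
  assumes "1 \<le> k"
  shows "rgen 0 \<circ> rgen (Suc 0) \<circ> rgen 0 \<circ> rgen (Suc 0) \<in> derived AutG (generate AutG (H_gens k))"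
proof -
  have gens: "rgen 0 \<in> generate AutG (H_gens k)" "rgen (Suc 0) \<in> generate AutG (H_gens k)"
    using assms by (auto simp: H_gens_def intro: generate.incl)
  have inv: "inv\<^bsub>AutG\<^esub> rgen i = rgen i" for i
    by (simp add: inv_AutG_involution tree_aut_rgen fun_eq_iff)
  have "rgen 0 \<otimes>\<^bsub>AutG\<^esub> rgen (Suc 0) \<otimes>\<^bsub>AutG\<^esub> inv\<^bsub>AutG\<^esub> rgen 0 \<otimes>\<^bsub>AutG\<^esub> inv\<^bsub>AutG\<^esub> rgen (Suc 0)
      \<in> derived_set AutG (generate AutG (H_gens k))"
    by (intro UN_I[OF gens(1)] UN_I[OF gens(2)]) simp
  then show ?thesis
    unfolding derived_def inv AutG_simps(2) by (rule generate.incl)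
qed

theorem mainTheorem17:
  fixes k :: nat
  assumes "k \<ge> 1"
  defines "H \<equiv> generate AutG ((\<lambda>i. rgen i) ` {0..k} \<union> {bgen k 0, bgen k 1, bgen k 2})"
  shows "regular_branch H (derived AutG H)"
proof -
  have H: "H = generate AutG (H_gens k)"
    by (simp add: H_def H_gens_def)
  have derived_sub: "derived AutG H \<subseteq> H"
    unfolding H using subgroup_H by (rule AutG.derived_incl[OF subset_refl])
  have swap: "rgen 0 \<in> generate AutG (H_gens k)"
    by (auto simp: H_gens_def intro: generate.incl)
  have delta_closed: "\<forall>g\<in>derived AutG H. \<forall>x. delta x g \<in> derived AutG H"
    unfolding H using delta_derived_closed[OF subgroup_H swap delta_True_derived_H[OF assms(1)]]
    by blast
  have "rgen 0 \<circ> rgen (Suc 0) \<circ> rgen 0 \<circ> rgen (Suc 0) \<noteq> id"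
    by (auto simp: fun_eq_iff intro!: exI[of _ "[False, False]"])
  moreover have "derived AutG H \<subseteq> carrier AutG"
    using derived_sub subgroup.subset[OF subgroup_H] unfolding H by blast
  ultimately have "infinite (derived AutG H)"
    using commutator_rgen_in_derived[OF assms(1)] delta_closed
    by (intro infinite_if_delta_True_closed) (auto simp: H)
  moreover have "finite (rcosets\<^bsub>AutG\<lparr>carrier := H\<rparr>\<^esub> derived AutG H)"
    unfolding H using finite_H_gens tree_aut_H_gens H_gens_involution
    by (intro AutG.finite_index_derived_generate_involutions) auto
  ultimately show ?thesis
    unfolding regular_branch_def H
    using derived_sub delta_closed subgroup_H AutG.derived_subgroup_is_normal[OF subgroup_H]
    by (auto simp: H dest: infinite_super)
qed

end
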